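(* Let $p$ be an odd prime, $m\ge1$ and $n\ge 2$ integers such that $p$ divides $|\mathrm{GL}_m(\mathbb{Z}/2\mathbb{Z})|$. Let $P\in\mathrm{GL}_m(\mathbb{Z}/2\mathbb{Z})$ have order $p$, and let $E\in\mathrm{GL}_n(\mathbb{Z}/p\mathbb{Z})$ be a non-identity diagonal matrix with diagonal entries $(1,\epsilon_2,\dots,\epsilon_n)$, $\epsilon_i\in\{-1,1\}$. On $A = (\mathbb{Z}/2\mathbb{Z})^m\times(\mathbb{Z}/p\mathbb{Z})^n$ (column vectors) define \[ (u,v)\cdot(x,y) = (u + P^{v_1}x,\ v+y),\qquad (u,v)\circ(x,y) = (u+x,\ v + E^{u_1}y), \] where $u=(u_1,\dots,u_m)^T$, $v=(v_1,\dots,v_n)^T$. Then $(A,\cdot,\circ)$ is a skew brace, and if there exists $w\in\mathbb{Z}/p\mathbb{Z}$ such that $P^{w}-I_m$ has a non-zero entry in its first row, then $A$ is not meta-trivial.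
   Context: A skew brace is a set $A$ with two group operations $\cdot$ and $\circ$ such that $a\circ(b\cdot c) = (a\circ b)\cdot a^{-1}\cdot(a\circ c)$ for all $a,b,c$, where $a^{-1}$ is the inverse in $(A,\cdot)$. Define $a*b = a^{-1}\cdot(a\circ b)\cdot b^{-1}$ and let $A'$ be the subgroup of $(A,\cdot)$ generated by all $a*b$. $A$ is meta-trivial if $x\circ y = x\cdot y$ for all $x,y\in A'$. *)

theory Defs
  imports "Jordan_Normal_Form.Matrix" "Berlekamp_Zassenhaus.Finite_Field"
    "HOL-Algebra.Generated_Groups"
begin

definition mk_grp :: "'a set \<Rightarrow> ('a \<Rightarrow> 'a \<Rightarrow> 'a) \<Rightarrow> 'a monoid" where
  "mk_grp A f = \<lparr>carrier = A, mult = f,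
      one = (THE e. e \<in> A \<and> (\<forall>a\<in>A. f e a = a \<and> f a e = a))\<rparr>"

definition skew_brace :: "'a set \<Rightarrow> ('a \<Rightarrow> 'a \<Rightarrow> 'a) \<Rightarrow> ('a \<Rightarrow> 'a \<Rightarrow> 'a) \<Rightarrow> bool" where
  "skew_brace A dot circ \<longleftrightarrow>
     group (mk_grp A dot) \<and> group (mk_grp A circ) \<and>
     (\<forall>a\<in>A. \<forall>b\<in>A. \<forall>c\<in>A.
        circ a (dot b c) = dot (dot (circ a b) (inv\<^bsub>mk_grp A dot\<^esub> a)) (circ a c))"

definition brace_star :: "'a set \<Rightarrow> ('a \<Rightarrow> 'a \<Rightarrow> 'a) \<Rightarrow> ('a \<Rightarrow> 'a \<Rightarrow> 'a) \<Rightarrow> 'a \<Rightarrow> 'a \<Rightarrow> 'a" where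
  "brace_star A dot circ a b =
     dot (dot (inv\<^bsub>mk_grp A dot\<^esub> a) (circ a b)) (inv\<^bsub>mk_grp A dot\<^esub> b)"

definition brace_commutator :: "'a set \<Rightarrow> ('a \<Rightarrow> 'a \<Rightarrow> 'a) \<Rightarrow> ('a \<Rightarrow> 'a \<Rightarrow> 'a) \<Rightarrow> 'a set" where
  "brace_commutator A dot circ =
     generate (mk_grp A dot) {brace_star A dot circ a b | a b. a \<in> A \<and> b \<in> A}"

definition meta_trivial :: "'a set \<Rightarrow> ('a \<Rightarrow> 'a \<Rightarrow> 'a) \<Rightarrow> ('a \<Rightarrow> 'a \<Rightarrow> 'a) \<Rightarrow> bool" where
  "meta_trivial A dot circ \<longleftrightarrow>
     (\<forall>x\<in>brace_commutator A dot circ. \<forall>y\<in>brace_commutator A dot circ. circ x y = dot x y)"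

end

theory Submission
  imports Defs
begin

text \<open>Both operations are semidirect products of elementary abelian groups: in \<open>(A, \<cdot>)\<close>
  the second factor acts on the first through \<open>v \<mapsto> P^v\<^sub>1\<close>, in \<open>(A, \<circ>)\<close> the first acts
  on the second through \<open>u \<mapsto> E^u\<^sub>1\<close>. Because \<open>E\<close> fixes the first coordinate, the action
  of \<open>E^u\<^sub>1\<close> does not change \<open>P^y\<^sub>1\<close>; granted this compatibility, the skew brace identity
  is a direct computation, which also gives \<open>(u, v) * (x, y) = (P^(-v\<^sub>1) x - x, E^u\<^sub>1 y - y)\<close>.
  Hence \<open>X = (0, -w e\<^sub>1) * (e\<^sub>j, 0)\<close> has first entry \<open>(P^w - I)\<^sub>1\<^sub>j = 1\<close>, and
  \<open>Y = (e\<^sub>1, 0) * (0, e\<^sub>i) = (0, -2 e\<^sub>i)\<close> where \<open>\<epsilon>\<^sub>i = -1\<close>; so the \<open>i\<close>-th entries of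
  \<open>X \<circ> Y\<close> and \<open>X \<cdot> Y\<close> are \<open>2\<close> and \<open>-2\<close>, which differ because \<open>p\<close> is odd.\<close>

lemma pow_mat_add:
  assumes "A \<in> carrier_mat k k"
  shows "A ^\<^sub>m (i + j) = A ^\<^sub>m i * A ^\<^sub>m j"
proof (induction j)
  case 0
  then show ?case using assms by simp
next
  case (Suc j)
  have "A ^\<^sub>m (i + Suc j) = (A ^\<^sub>m i * A ^\<^sub>m j) * A" using Suc by simp
  also have "\<dots> = A ^\<^sub>m i * (A ^\<^sub>m j * A)"
    using assms by (intro assoc_mult_mat[of _ k k _ k _ k]) auto
  finally show ?case by simp
qed

lemma pow_mat_mod:
  assumes A: "A \<in> carrier_mat k k" and "A ^\<^sub>m c = 1\<^sub>m k"
  shows "A ^\<^sub>m s = A ^\<^sub>m (s mod c)"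
proof -
  have "A ^\<^sub>m (c * q) = 1\<^sub>m k" for q
    using assms by (induction q) (simp_all add: pow_mat_add[OF A, of c])
  then show ?thesis
    using pow_mat_add[OF A, of "c * (s div c)" "s mod c"] A by simp
qed

lemma pow_mat_to_int_mod_ring_add:
  fixes a b :: "'b::finite mod_ring"
  assumes A: "A \<in> carrier_mat k k" and "A ^\<^sub>m CARD('b) = 1\<^sub>m k"
  shows "A ^\<^sub>m nat (to_int_mod_ring (a + b))
    = A ^\<^sub>m nat (to_int_mod_ring a) * A ^\<^sub>m nat (to_int_mod_ring b)"
proof -
  have "to_int_mod_ring a \<ge> 0" "to_int_mod_ring b \<ge> 0"
    using range_to_int_mod_ring[where 'a='b] by auto
  then have "nat (to_int_mod_ring (a + b))
      = (nat (to_int_mod_ring a) + nat (to_int_mod_ring b)) mod CARD('b)"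
    unfolding to_int_mod_ring_add by (simp add: nat_mod_distrib nat_add_distrib)
  then show ?thesis using pow_mat_mod[OF assms] pow_mat_add[OF A] by metis
qed

lemma mk_grp_eq:
  assumes "e \<in> A" and "\<And>a. a \<in> A \<Longrightarrow> f e a = a \<and> f a e = a"
  shows "mk_grp A f = \<lparr>carrier = A, mult = f, one = e\<rparr>"
proof -
  have "(THE e. e \<in> A \<and> (\<forall>a\<in>A. f e a = a \<and> f a e = a)) = e"
    by (rule the_equality) (use assms in metis)+
  then show ?thesis unfolding mk_grp_def by simp
qed

lemma group_mk_grpI:
  assumes e: "e \<in> A" and unit: "\<And>a. a \<in> A \<Longrightarrow> f e a = a \<and> f a e = a"
    and "\<And>a b. a \<in> A \<Longrightarrow> b \<in> A \<Longrightarrow> f a b \<in> A"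
    and "\<And>a b c. a \<in> A \<Longrightarrow> b \<in> A \<Longrightarrow> c \<in> A \<Longrightarrow> f (f a b) c = f a (f b c)"
    and inv: "\<And>a. a \<in> A \<Longrightarrow> i a \<in> A \<and> f (i a) a = e"
  shows "group (mk_grp A f)"
proof -
  have "group \<lparr>carrier = A, mult = f, one = e\<rparr>" (is "group ?G")
  proof (rule groupI)
    fix a assume "a \<in> carrier ?G"
    then show "\<exists>b\<in>carrier ?G. b \<otimes>\<^bsub>?G\<^esub> a = \<one>\<^bsub>?G\<^esub>" using inv by auto
  qed (use assms in auto)
  then show ?thesis using mk_grp_eq[of e A f] e unit by simp
qed

lemma inv_mk_grp_eq:
  assumes "group (mk_grp A f)" and "e \<in> A" and "\<And>a. a \<in> A \<Longrightarrow> f e a = a \<and> f a e = a"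
    and "a \<in> A" and "b \<in> A" and "f b a = e"
  shows "inv\<^bsub>mk_grp A f\<^esub> a = b"
  by (rule group.inv_equality[OF assms(1)]) (use assms in \<open>simp_all add: mk_grp_eq\<close>)

lemma minus_add_cancel_vec [simp]:
  "dim_vec b = dim_vec (a :: 'a::ab_group_add vec) \<Longrightarrow> - b + (b + a) = a"
  by (intro eq_vecI) auto

lemma add_add_uminus_cancel_vec [simp]:
  "dim_vec b = dim_vec (a :: 'a::ab_group_add vec) \<Longrightarrow> b + (a + - b) = a"
  by (intro eq_vecI) auto

lemma add_left_commute_vec:
  "(a :: 'a::ab_semigroup_add vec) \<in> carrier_vec n \<Longrightarrow> b \<in> carrier_vec n \<Longrightarrow> c \<in> carrier_vec n
    \<Longrightarrow> a + (b + c) = b + (a + c)"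
  by (intro eq_vecI) (auto simp: ac_simps)

locale additive_rep =
  fixes l k :: nat and \<phi> :: "'b::comm_ring_1 vec \<Rightarrow> 'a::comm_ring_1 mat"
  assumes carrier [simp]: "v \<in> carrier_vec l \<Longrightarrow> \<phi> v \<in> carrier_mat k k"
    and zero: "\<phi> (0\<^sub>v l) = 1\<^sub>m k"
    and add: "v \<in> carrier_vec l \<Longrightarrow> w \<in> carrier_vec l \<Longrightarrow> \<phi> (v + w) = \<phi> v * \<phi> w"
begin

lemma dim_row_rep [simp]: "v \<in> carrier_vec l \<Longrightarrow> dim_row (\<phi> v) = k"
  using carrier_matD(1)[OF carrier] .

lemma mult_vec_carrier [simp]:
  "v \<in> carrier_vec l \<Longrightarrow> x \<in> carrier_vec k \<Longrightarrow> \<phi> v *\<^sub>v x \<in> carrier_vec k"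
  by (rule mult_mat_vec_carrier) simp_all

lemma zero_mult_vec [simp]: "x \<in> carrier_vec k \<Longrightarrow> \<phi> (0\<^sub>v l) *\<^sub>v x = x"
  by (simp add: zero)

lemma mult_vec_zero [simp]: "v \<in> carrier_vec l \<Longrightarrow> \<phi> v *\<^sub>v 0\<^sub>v k = 0\<^sub>v k"
  using carrier_matD[OF carrier[of v]] by (intro eq_vecI) auto

lemma mult_vec_add [simp]:
  "v \<in> carrier_vec l \<Longrightarrow> x \<in> carrier_vec k \<Longrightarrow> y \<in> carrier_vec k
    \<Longrightarrow> \<phi> v *\<^sub>v (x + y) = \<phi> v *\<^sub>v x + \<phi> v *\<^sub>v y"
  by (simp add: mult_add_distrib_mat_vec[of _ k k])

lemma mult_vec_uminus [simp]:
  "v \<in> carrier_vec l \<Longrightarrow> x \<in> carrier_vec k \<Longrightarrow> \<phi> v *\<^sub>v (- x) = - (\<phi> v *\<^sub>v x)"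
  using carrier_matD[OF carrier[of v]] by (intro eq_vecI) auto

lemma mult_vec_mult_vec [simp]:
  "v \<in> carrier_vec l \<Longrightarrow> w \<in> carrier_vec l \<Longrightarrow> x \<in> carrier_vec k
    \<Longrightarrow> \<phi> v *\<^sub>v (\<phi> w *\<^sub>v x) = \<phi> (v + w) *\<^sub>v x"
  by (simp add: add assoc_mult_mat_vec[of _ k k _ k])

end

definition semidirect_by_snd ::
    "('b::plus vec \<Rightarrow> 'a::semiring_0 mat) \<Rightarrow> 'a vec \<times> 'b vec \<Rightarrow> 'a vec \<times> 'b vec \<Rightarrow> 'a vec \<times> 'b vec"
    where "semidirect_by_snd \<phi> = (\<lambda>(u, v) (x, y). (u + \<phi> v *\<^sub>v x, v + y))"

definition semidirect_by_fst ::
    "('a::plus vec \<Rightarrow> 'b::semiring_0 mat) \<Rightarrow> 'a vec \<times> 'b vec \<Rightarrow> 'a vec \<times> 'b vec \<Rightarrow> 'a vec \<times> 'b vec"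
    where "semidirect_by_fst \<psi> = (\<lambda>(u, v) (x, y). (u + x, v + \<psi> u *\<^sub>v y))"

lemma semidirect_by_snd_simp [simp]:
  "semidirect_by_snd \<phi> (u, v) (x, y) = (u + \<phi> v *\<^sub>v x, v + y)"
  by (simp add: semidirect_by_snd_def)

lemma semidirect_by_fst_simp [simp]:
  "semidirect_by_fst \<psi> (u, v) (x, y) = (u + x, v + \<psi> u *\<^sub>v y)"
  by (simp add: semidirect_by_fst_def)

context additive_rep
begin

lemma group_semidirect_by_snd:
  "group (mk_grp (carrier_vec k \<times> carrier_vec l) (semidirect_by_snd \<phi>))"
  by (rule group_mk_grpI[where e = "(0\<^sub>v k, 0\<^sub>v l)" and i = "\<lambda>(u, v). (- (\<phi> (- v) *\<^sub>v u), - v)"])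
    (auto simp: add.assoc)

lemma semidirect_by_snd_unit:
  "a \<in> carrier_vec k \<times> carrier_vec l \<Longrightarrow>
    semidirect_by_snd \<phi> (0\<^sub>v k, 0\<^sub>v l) a = a \<and> semidirect_by_snd \<phi> a (0\<^sub>v k, 0\<^sub>v l) = a"
  by auto

lemma inv_semidirect_by_snd:
  assumes "u \<in> carrier_vec k" and "v \<in> carrier_vec l"
  shows "inv\<^bsub>mk_grp (carrier_vec k \<times> carrier_vec l) (semidirect_by_snd \<phi>)\<^esub> (u, v)
    = (- (\<phi> (- v) *\<^sub>v u), - v)"
  by (rule inv_mk_grp_eq[OF group_semidirect_by_snd _ semidirect_by_snd_unit]) (use assms in auto)

lemma group_semidirect_by_fst:
  "group (mk_grp (carrier_vec l \<times> carrier_vec k) (semidirect_by_fst \<phi>))"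
  by (rule group_mk_grpI[where e = "(0\<^sub>v l, 0\<^sub>v k)" and i = "\<lambda>(v, u). (- v, - (\<phi> (- v) *\<^sub>v u))"])
    (auto simp: add.assoc)

end

lemma brace_star_in_brace_commutator:
  "a \<in> A \<Longrightarrow> b \<in> A \<Longrightarrow> brace_star A dot circ a b \<in> brace_commutator A dot circ"
  unfolding brace_commutator_def by (blast intro: generate.incl)

locale semidirect_brace =
  \<phi>: additive_rep l k \<phi> + \<psi>: additive_rep k l \<psi>
  for l k :: nat and \<phi> :: "'b::comm_ring_1 vec \<Rightarrow> 'a::comm_ring_1 mat" and \<psi> :: "'a vec \<Rightarrow> 'b mat" +
  assumes compat: "u \<in> carrier_vec k \<Longrightarrow> y \<in> carrier_vec l \<Longrightarrow> \<phi> (\<psi> u *\<^sub>v y) = \<phi> y"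
begin

abbreviation pairs :: "('a vec \<times> 'b vec) set" where
  "pairs \<equiv> carrier_vec k \<times> carrier_vec l"

lemma skew_brace: "skew_brace pairs (semidirect_by_snd \<phi>) (semidirect_by_fst \<psi>)"
  unfolding skew_brace_def
proof (intro conjI ballI)
  show "group (mk_grp pairs (semidirect_by_snd \<phi>))"
    by (fact \<phi>.group_semidirect_by_snd)
  show "group (mk_grp pairs (semidirect_by_fst \<psi>))"
    by (fact \<psi>.group_semidirect_by_fst)
  fix a b c assume "a \<in> pairs" "b \<in> pairs" "c \<in> pairs"
  then obtain u v x y z w where abc: "a = (u, v)" "b = (x, y)" "c = (z, w)"
    and carrier: "u \<in> carrier_vec k" "v \<in> carrier_vec l" "x \<in> carrier_vec k"
      "y \<in> carrier_vec l" "z \<in> carrier_vec k" "w \<in> carrier_vec l"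
    by (metis mem_Sigma_iff prod.collapse)
  have "\<psi> u *\<^sub>v y + (v + \<psi> u *\<^sub>v w) = v + (\<psi> u *\<^sub>v y + \<psi> u *\<^sub>v w)"
    using carrier by (intro add_left_commute_vec[of _ l]) simp_all
  then show "semidirect_by_fst \<psi> a (semidirect_by_snd \<phi> b c) =
    semidirect_by_snd \<phi> (semidirect_by_snd \<phi> (semidirect_by_fst \<psi> a b)
      (inv\<^bsub>mk_grp pairs (semidirect_by_snd \<phi>)\<^esub> a)) (semidirect_by_fst \<psi> a c)"
    using carrier by (simp add: abc \<phi>.inv_semidirect_by_snd compat)
qed

lemma brace_star:
  assumes "u \<in> carrier_vec k" "v \<in> carrier_vec l" "x \<in> carrier_vec k" "y \<in> carrier_vec l"
  shows "brace_star pairs (semidirect_by_snd \<phi>) (semidirect_by_fst \<psi>) (u, v) (x, y)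
    = (\<phi> (- v) *\<^sub>v x - x, \<psi> u *\<^sub>v y - y)"
  using assms by (simp add: brace_star_def \<phi>.inv_semidirect_by_snd compat
      minus_add_uminus_vec[of "\<phi> (- v) *\<^sub>v x" k] minus_add_uminus_vec[of "\<psi> u *\<^sub>v y" l])

lemma not_meta_trivial:
  assumes "u \<in> carrier_vec k" "v \<in> carrier_vec l" "x \<in> carrier_vec k" "y \<in> carrier_vec l"
    and moved: "\<psi> (\<phi> (- v) *\<^sub>v x - x) *\<^sub>v (\<psi> u *\<^sub>v y - y) \<noteq> \<psi> u *\<^sub>v y - y"
  shows "\<not> meta_trivial pairs (semidirect_by_snd \<phi>) (semidirect_by_fst \<psi>)"
proof
  define X where "X = \<phi> (- v) *\<^sub>v x - x"
  define Y where "Y = \<psi> u *\<^sub>v y - y"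
  have "(X, 0\<^sub>v l) = brace_star pairs (semidirect_by_snd \<phi>) (semidirect_by_fst \<psi>) (0\<^sub>v k, v) (x, 0\<^sub>v l)"
    "(0\<^sub>v k, Y) = brace_star pairs (semidirect_by_snd \<phi>) (semidirect_by_fst \<psi>) (u, 0\<^sub>v l) (0\<^sub>v k, y)"
    using assms by (simp_all add: brace_star X_def Y_def)
  then have "(X, 0\<^sub>v l) \<in> brace_commutator pairs (semidirect_by_snd \<phi>) (semidirect_by_fst \<psi>)"
    "(0\<^sub>v k, Y) \<in> brace_commutator pairs (semidirect_by_snd \<phi>) (semidirect_by_fst \<psi>)"
    using assms by (simp_all add: brace_star_in_brace_commutator)
  moreover assume "meta_trivial pairs (semidirect_by_snd \<phi>) (semidirect_by_fst \<psi>)"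
  ultimately have "semidirect_by_fst \<psi> (X, 0\<^sub>v l) (0\<^sub>v k, Y) = semidirect_by_snd \<phi> (X, 0\<^sub>v l) (0\<^sub>v k, Y)"
    unfolding meta_trivial_def by blast
  then show False
    using moved assms by (simp add: X_def Y_def)
qed

end

lemma diagonal_mat_row:
  fixes E :: "'a::semiring_1 mat"
  assumes "diagonal_mat E" and "E \<in> carrier_mat n n" and "i < n"
  shows "row E i = E $$ (i, i) \<cdot>\<^sub>v unit_vec n i"
  using assms by (intro eq_vecI) (auto simp: diagonal_mat_def)

lemma diagonal_mat_mult_vec_nth:
  fixes E :: "'a::comm_ring_1 mat"
  assumes "diagonal_mat E" and "E \<in> carrier_mat n n" and "y \<in> carrier_vec n" and "i < n"
  shows "(E *\<^sub>v y) $ i = E $$ (i, i) * y $ i"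
  using assms by (simp add: diagonal_mat_row)

lemma sign_diagonal_mat_square:
  fixes E :: "'a::comm_ring_1 mat"
  assumes diag: "diagonal_mat E" and E: "E \<in> carrier_mat n n"
    and signs: "\<forall>i<n. E $$ (i, i) = 1 \<or> E $$ (i, i) = -1"
  shows "E * E = 1\<^sub>m n"
proof (rule eq_matI)
  fix i j assume "i < dim_row (1\<^sub>m n)" "j < dim_col (1\<^sub>m n)"
  then have ij: "i < n" "j < n" by auto
  have "(E * E) $$ (i, j) = (E *\<^sub>v col E j) $ i"
    using E ij by simp
  also have "\<dots> = E $$ (i, i) * E $$ (i, j)"
    using diag E ij by (simp add: diagonal_mat_mult_vec_nth del: index_mult_mat_vec)
  also have "\<dots> = 1\<^sub>m n $$ (i, j)"
    using diag E ij signs by (cases "i = j") (auto simp: diagonal_mat_def)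
  finally show "(E * E) $$ (i, j) = 1\<^sub>m n $$ (i, j)" .
qed (use E in auto)

lemma pow_mat_mult_vec_nth_fixed:
  assumes M: "M \<in> carrier_mat n n" and fixed: "\<And>y. y \<in> carrier_vec n \<Longrightarrow> (M *\<^sub>v y) $ i = y $ i"
    and "y \<in> carrier_vec n"
  shows "(M ^\<^sub>m k *\<^sub>v y) $ i = y $ i"
  using \<open>y \<in> carrier_vec n\<close>
proof (induction k arbitrary: y)
  case 0
  then show ?case using M by simp
next
  case (Suc k)
  then have "(M ^\<^sub>m Suc k *\<^sub>v y) $ i = (M ^\<^sub>m k *\<^sub>v (M *\<^sub>v y)) $ i"
    using M by (simp add: assoc_mult_mat_vec[of _ n n _ n])
  also have "\<dots> = y $ i"
    using Suc M by (simp add: fixed)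
  finally show ?case .
qed

lemma additive_rep_pow_first_coord:
  fixes M :: "'a::comm_ring_1 mat"
  assumes M: "M \<in> carrier_mat k k" and "M ^\<^sub>m CARD('b) = 1\<^sub>m k" and "0 < l"
  shows "additive_rep l k (\<lambda>v :: 'b::nontriv mod_ring vec. M ^\<^sub>m nat (to_int_mod_ring (v $ 0)))"
proof
  fix v w :: "'b mod_ring vec" assume "v \<in> carrier_vec l" "w \<in> carrier_vec l"
  then show "M ^\<^sub>m nat (to_int_mod_ring ((v + w) $ 0))
      = M ^\<^sub>m nat (to_int_mod_ring (v $ 0)) * M ^\<^sub>m nat (to_int_mod_ring (w $ 0))"
    using assms by (simp add: pow_mat_to_int_mod_ring_add)
qed (use assms in auto)

lemma semidirect_brace_first_coord_pow:
  fixes P :: "'r::nontriv mod_ring mat" and E :: "'q::nontriv mod_ring mat"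
  assumes P: "P \<in> carrier_mat m m" "P ^\<^sub>m CARD('q) = 1\<^sub>m m"
    and E: "E \<in> carrier_mat n n" "E ^\<^sub>m CARD('r) = 1\<^sub>m n"
    and E_first: "\<And>y. y \<in> carrier_vec n \<Longrightarrow> (E *\<^sub>v y) $ 0 = y $ 0"
    and "0 < m" and "0 < n"
  shows "semidirect_brace n m (\<lambda>v :: 'q mod_ring vec. P ^\<^sub>m nat (to_int_mod_ring (v $ 0)))
    (\<lambda>u :: 'r mod_ring vec. E ^\<^sub>m nat (to_int_mod_ring (u $ 0)))"
proof (intro semidirect_brace.intro semidirect_brace_axioms.intro)
  show "additive_rep n m (\<lambda>v :: 'q mod_ring vec. P ^\<^sub>m nat (to_int_mod_ring (v $ 0)))"
    "additive_rep m n (\<lambda>u :: 'r mod_ring vec. E ^\<^sub>m nat (to_int_mod_ring (u $ 0)))"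
    using assms by (simp_all add: additive_rep_pow_first_coord)
  fix u :: "'r mod_ring vec" and y :: "'q mod_ring vec"
  assume "y \<in> carrier_vec n"
  then show "P ^\<^sub>m nat (to_int_mod_ring ((E ^\<^sub>m nat (to_int_mod_ring (u $ 0)) *\<^sub>v y) $ 0))
      = P ^\<^sub>m nat (to_int_mod_ring (y $ 0))"
    using pow_mat_mult_vec_nth_fixed[OF E(1) E_first] by simp
qed

lemma pow_mat_to_int_mod_ring_bool:
  assumes "M \<in> carrier_mat n n" and "b \<noteq> 0"
  shows "M ^\<^sub>m nat (to_int_mod_ring (b :: bool mod_ring)) = M"
proof -
  have "b = 1" using \<open>b \<noteq> 0\<close> by transfer auto
  moreover have "to_int_mod_ring (1 :: bool mod_ring) = 1" by transfer simp
  ultimately show ?thesis using assms(1) by simp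
qed

lemma two_neq_minus_two_mod_ring:
  assumes "odd CARD('p)"
  shows "(2 :: 'p::prime_card mod_ring) \<noteq> - 2"
proof
  assume "(2 :: 'p mod_ring) = - 2"
  then have "(of_nat 4 :: 'p mod_ring) = 0"
    by (metis add.left_inverse numeral_Bit0 of_nat_numeral)
  then have "CARD('p) dvd 2 ^ 2"
    using of_nat_0_mod_ring_dvd by fastforce
  then have "CARD('p) dvd 2"
    using prime_card prime_dvd_power by blast
  then have "CARD('p) \<le> 2"
    by (rule dvd_imp_le) simp
  moreover have "CARD('p) > 1"
    using prime_card prime_gt_1_nat by blast
  ultimately show False
    using assms by (simp add: le_Suc_eq numeral_2_eq_2)
qed

lemma sign_flip_moves_difference:
  fixes E :: "'p::prime_card mod_ring mat"
  assumes "odd CARD('p)" and diag: "diagonal_mat E" and E: "E \<in> carrier_mat n n"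
    and i: "i < n" and flip: "E $$ (i, i) = -1"
  shows "E *\<^sub>v (E *\<^sub>v unit_vec n i - unit_vec n i) \<noteq> E *\<^sub>v unit_vec n i - unit_vec n i"
proof
  assume "E *\<^sub>v (E *\<^sub>v unit_vec n i - unit_vec n i) = E *\<^sub>v unit_vec n i - unit_vec n i"
  then have "(E *\<^sub>v (E *\<^sub>v unit_vec n i - unit_vec n i)) $ i = (E *\<^sub>v unit_vec n i - unit_vec n i) $ i"
    by simp
  then have "(2 :: 'p mod_ring) = - 2"
    using diag E i flip by (simp add: diagonal_mat_mult_vec_nth del: index_mult_mat_vec)
  with two_neq_minus_two_mod_ring[OF \<open>odd CARD('p)\<close>] show False ..
qed

theorem proposition9p4:
  fixes P :: "bool mod_ring mat"
    and E :: "'p::prime_card mod_ring mat"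
    and m n :: nat
  assumes p_odd: "odd CARD('p)"
    and m: "m \<ge> 1" and n: "n \<ge> 2"
    and p_dvd: "CARD('p) dvd card {M \<in> carrier_mat m m. invertible_mat (M :: bool mod_ring mat)}"
    and P_GL: "P \<in> carrier_mat m m" "invertible_mat P"
    and P_ord: "P ^\<^sub>m CARD('p) = 1\<^sub>m m" "\<forall>k. 0 < k \<and> k < CARD('p) \<longrightarrow> P ^\<^sub>m k \<noteq> 1\<^sub>m m"
    and E_GL: "E \<in> carrier_mat n n" "invertible_mat E"
    and E_diag: "\<forall>i<n. \<forall>j<n. i \<noteq> j \<longrightarrow> E $$ (i, j) = 0"
    and E_11: "E $$ (0, 0) = 1"
    and E_eps: "\<forall>i<n. E $$ (i, i) = 1 \<or> E $$ (i, i) = -1"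
    and E_nonid: "E \<noteq> 1\<^sub>m n"
  defines "A \<equiv> carrier_vec m \<times> carrier_vec n"
    and "dot \<equiv> \<lambda>(u, v) (x, y). (u + P ^\<^sub>m nat (to_int_mod_ring (v $ 0)) *\<^sub>v x, v + y)"
    and "circ \<equiv> \<lambda>(u, v) (x, y). (u + x, v + E ^\<^sub>m nat (to_int_mod_ring (u $ 0)) *\<^sub>v y)"
  shows "skew_brace A dot circ \<and>
    ((\<exists>w :: 'p mod_ring. \<exists>j<m. (P ^\<^sub>m nat (to_int_mod_ring w) - 1\<^sub>m m) $$ (0, j) \<noteq> 0)
       \<longrightarrow> \<not> meta_trivial A dot circ)"
proof -
  define \<Phi> where "\<Phi> = (\<lambda>v :: 'p mod_ring vec. P ^\<^sub>m nat (to_int_mod_ring (v $ 0)))"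
  define \<Psi> where "\<Psi> = (\<lambda>u :: bool mod_ring vec. E ^\<^sub>m nat (to_int_mod_ring (u $ 0)))"
  have dot: "dot = semidirect_by_snd \<Phi>" and circ: "circ = semidirect_by_fst \<Psi>"
    by (simp_all add: dot_def circ_def \<Phi>_def \<Psi>_def semidirect_by_snd_def semidirect_by_fst_def)
  have diag: "diagonal_mat E"
    using E_GL E_diag by (simp add: diagonal_mat_def)
  have "E ^\<^sub>m CARD(bool) = 1\<^sub>m n"
    using sign_diagonal_mat_square[OF diag _ E_eps] E_GL by (simp add: numeral_2_eq_2)
  then interpret semidirect_brace n m \<Phi> \<Psi>
    unfolding \<Phi>_def \<Psi>_def using P_GL P_ord E_GL diag E_11 m n
    by (intro semidirect_brace_first_coord_pow) (simp_all add: diagonal_mat_mult_vec_nth del: index_mult_mat_vec)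
  show ?thesis
    unfolding A_def dot circ
  proof (intro conjI impI skew_brace)
    assume "\<exists>w :: 'p mod_ring. \<exists>j<m. (P ^\<^sub>m nat (to_int_mod_ring w) - 1\<^sub>m m) $$ (0, j) \<noteq> 0"
    then obtain w j where j: "j < m"
      and moved: "(\<Phi> (w \<cdot>\<^sub>v unit_vec n 0) *\<^sub>v unit_vec m j - unit_vec m j) $ 0 \<noteq> 0"
      using P_GL m n by (auto simp: \<Phi>_def)
    obtain i where i: "i < n" and flip: "E $$ (i, i) = -1"
      using E_nonid E_eps E_GL diag by (metis eq_matI diagonal_mat_def index_one_mat carrier_matD)
    show "\<not> meta_trivial pairs (semidirect_by_snd \<Phi>) (semidirect_by_fst \<Psi>)"
      using not_meta_trivial[of "unit_vec m 0" "- (w \<cdot>\<^sub>v unit_vec n 0)" "unit_vec m j" "unit_vec n i"]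
        sign_flip_moves_difference[OF p_odd diag _ i flip] E_GL i j m moved
      by (simp add: \<Psi>_def pow_mat_to_int_mod_ring_bool)
  qed
qed

end
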